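(* Let $T$ be a $\mathcal{C}_b$-semigroup of kernel operators on $\mathcal{B}_b(\mathds{R}^d)$ of type $(M,\omega)$ consisting of strong Feller operators, with full generator $\hat A$ and Laplace transform $(R(\lambda))_{\operatorname{Re}\lambda>\omega}$, and let $\rho>0$ be such that $T(t)f\in\mathcal{C}_b^\rho(\mathds{R}^d)$ for all $t>0$, $f\in\mathcal{B}_b(\mathds{R}^d)$ and $\|T(t)f\|_{\mathcal{C}_b^\rho}\le\varphi(t)\|f\|_\infty$ for $t\in(0,1)$, $f\in\mathcal{B}_b(\mathds{R}^d)$, for some $\varphi\in L^1(0,1)$. Then for every $\lambda\in\mathds{C}$ with $\operatorname{Re}\lambda>\omega$ we have $R(\lambda)f\in\mathcal{C}_b^\rho(\mathds{R}^d)$ for all $f\in\mathcal{B}_b(\mathds{R}^d)$ and $\|R(\lambda)f\|_{\mathcal{C}_b^\rho}\le C(\lambda)\|f\|_\infty$ with a constant $C(\lambda)$ satisfying $C(\lambda)\to0$ as $\operatorname{Re}\lambda\to\infty$. In particular $D(\hat A)\subset\mathcal{C}_b^\rho(\mathds{R}^d)$.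
   Context: Kernel operator: $Tf(x)=\int f(y)k(x,dy)$ with a bounded kernel. Semigroup of kernel operators of type $(M,\omega)$: kernel operators $T(t)$, $t>0$, with $T(t+s)=T(t)T(s)$, $\|T(t)\|\le Me^{\omega t}$, $(t,x)\mapsto T(t)f(x)$ measurable. $R(\lambda)f(x)=\int_0^\infty e^{-\lambda t}T(t)f(x)dt$. Full generator $\hat A=\{(f,g):T(t)f-f=\int_0^tT(s)g\,ds\ \forall t>0\}$, $D(\hat A)=\{f:\exists g,(f,g)\in\hat A\}$. $\mathcal{C}_b$-semigroup: leaves bounded continuous functions invariant and $T(t)f\to f$ boundedly pointwise as $t\to0$ for such $f$. Strong Feller: maps bounded Borel functions into bounded continuous ones. $\mathcal{C}_b^\rho$: standard Hölder space of order $\rho$ with its norm. *)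

theory Defs
  imports "HOL-Probability.Probability"
begin

type_synonym 'n fn = "real^'n \<Rightarrow> complex"

definition Bb :: "('n::finite) fn set" where
  "Bb = {f. f \<in> borel_measurable borel \<and> bounded (range f)}"

definition supnorm :: "('n::finite) fn \<Rightarrow> real" where
  "supnorm f = (SUP x. cmod (f x))"

definition Cb :: "('n::finite) fn set" where
  "Cb = {f. continuous_on UNIV f \<and> bounded (range f)}"

definition fin_kernel :: "(real^'n::finite \<Rightarrow> (real^'n) measure) \<Rightarrow> bool" where
  "fin_kernel k \<longleftrightarrow> (\<forall>x. sets (k x) = sets borel)
     \<and> (\<forall>A\<in>sets borel. (\<lambda>x. emeasure (k x) A) \<in> borel_measurable borel)
     \<and> (\<exists>C. \<forall>x. emeasure (k x) UNIV \<le> ennreal C)"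

text \<open>Kernel operator with a bounded complex kernel k = k1 - k2 + i (k3 - k4)
  (Jordan decomposition); only its action on Bb matters.\<close>
definition kernel_operator :: "(('n::finite) fn \<Rightarrow> 'n fn) \<Rightarrow> bool" where
  "kernel_operator T \<longleftrightarrow> (\<exists>k1 k2 k3 k4.
     fin_kernel k1 \<and> fin_kernel k2 \<and> fin_kernel k3 \<and> fin_kernel k4 \<and>
     (\<forall>f\<in>Bb. \<forall>x. T f x = (LINT y|k1 x. f y) - (LINT y|k2 x. f y)
                         + \<i> * ((LINT y|k3 x. f y) - (LINT y|k4 x. f y))))"

definition kernel_semigroup ::
  "(real \<Rightarrow> ('n::finite) fn \<Rightarrow> 'n fn) \<Rightarrow> real \<Rightarrow> real \<Rightarrow> bool" where
  "kernel_semigroup T M \<omega> \<longleftrightarrow>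
     (\<forall>t>0. kernel_operator (T t))
   \<and> (\<forall>t>0. \<forall>s>0. \<forall>f\<in>Bb. T (t + s) f = T t (T s f))
   \<and> (\<forall>t>0. \<forall>f\<in>Bb. supnorm (T t f) \<le> M * exp (\<omega> * t) * supnorm f)
   \<and> (\<forall>f\<in>Bb. (\<lambda>p. T (fst p) f (snd p))
         \<in> borel_measurable (restrict_space borel {0<..} \<Otimes>\<^sub>M borel))"

definition Cb_semigroup :: "(real \<Rightarrow> ('n::finite) fn \<Rightarrow> 'n fn) \<Rightarrow> bool" where
  "Cb_semigroup T \<longleftrightarrow>
     (\<forall>t>0. \<forall>f\<in>Cb. T t f \<in> Cb)
   \<and> (\<forall>f\<in>Cb. (\<forall>x. ((\<lambda>t. T t f x) \<longlongrightarrow> f x) (at_right 0))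
             \<and> (\<exists>C. \<forall>t\<in>{0<..1}. supnorm (T t f) \<le> C))"

definition strong_Feller :: "(('n::finite) fn \<Rightarrow> 'n fn) \<Rightarrow> bool" where
  "strong_Feller S \<longleftrightarrow> (\<forall>f\<in>Bb. S f \<in> Cb)"

definition laplace_tr :: "(real \<Rightarrow> ('n::finite) fn \<Rightarrow> 'n fn) \<Rightarrow> complex \<Rightarrow> 'n fn \<Rightarrow> 'n fn" where
  "laplace_tr T z f x = (LINT t:{0<..}|lborel. exp (- z * complex_of_real t) * T t f x)"

definition full_generator :: "(real \<Rightarrow> ('n::finite) fn \<Rightarrow> 'n fn) \<Rightarrow> ('n fn \<times> 'n fn) set" where
  "full_generator T = {(f, g). f \<in> Bb \<and> g \<in> Bb \<and>
      (\<forall>t>0. \<forall>x. T t f x - f x = (LINT s:{0<..t}|lborel. T s g x))}"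

definition partial_d :: "'n::finite \<Rightarrow> 'n fn \<Rightarrow> 'n fn" where
  "partial_d i g x = vector_derivative (\<lambda>t. g (x + t *\<^sub>R axis i 1)) (at 0)"

fun pd :: "('n::finite) list \<Rightarrow> 'n fn \<Rightarrow> 'n fn" where
  "pd [] f = f"
| "pd (i # is) f = partial_d i (pd is f)"

definition hk :: "real \<Rightarrow> nat" where "hk \<rho> = nat \<lfloor>\<rho>\<rfloor>"
definition halpha :: "real \<Rightarrow> real" where "halpha \<rho> = \<rho> - real (hk \<rho>)"

definition hoelder_semi :: "real \<Rightarrow> ('n::finite) fn \<Rightarrow> real" where
  "hoelder_semi \<alpha> g = (SUP p\<in>{p. fst p \<noteq> snd p}. cmod (g (fst p) - g (snd p)) / dist (fst p) (snd p) powr \<alpha>)"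

definition Cb_rho :: "real \<Rightarrow> ('n::finite) fn set" where
  "Cb_rho \<rho> = {f.
     (\<forall>ls. length ls < hk \<rho> \<longrightarrow> (\<forall>i x.
         ((\<lambda>t. pd ls f (x + t *\<^sub>R axis i 1)) has_vector_derivative pd (i # ls) f x) (at 0)))
   \<and> (\<forall>ls. length ls \<le> hk \<rho> \<longrightarrow> pd ls f \<in> Cb)
   \<and> (halpha \<rho> > 0 \<longrightarrow> (\<forall>ls. length ls = hk \<rho> \<longrightarrow>
         (\<exists>L. \<forall>x y. cmod (pd ls f x - pd ls f y) \<le> L * dist x y powr halpha \<rho>)))}"

definition Cb_rho_norm :: "real \<Rightarrow> ('n::finite) fn \<Rightarrow> real" where
  "Cb_rho_norm \<rho> f =
     (\<Sum>ls\<in>{ls. length ls \<le> hk \<rho>}. supnorm (pd ls f))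
   + (if halpha \<rho> > 0 then (\<Sum>ls\<in>{ls. length ls = hk \<rho>}. hoelder_semi (halpha \<rho>) (pd ls f)) else 0)"

end

(*
  The C_b^rho norm is a finite sum of sup norms of partial derivatives of order at most
  floor rho and of Hoelder seminorms of those of order floor rho. By dominated convergence
  (differentiating under the integral sign) each of these terms passes through a Bochner
  integral of a family F t whose C_b^rho norms are dominated by an integrable w, so the
  integral lies in C_b^rho with norm at most a constant times the integral of w.

  For R(lambda) f take F t = exp (- lambda t) T(t) f. For t < 1 the hypothesis gives the
  weight phi t; for t >= 1 the factorisation T(t) = T(1/2) T(t - 1/2) gives
  |phi (1/2)| |M| exp (omega (t - 1/2)). The Laplace transform of this weight at Re lambda
  tends to 0 as Re lambda -> infinity, again by dominated convergence. Finally, if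
  (f, g) is in the full generator, then f = T(1/2) f - int_0^(1/2) T(s) g ds, and both
  terms are in C_b^rho because phi is integrable near 0.
*)
theory Submission
  imports Defs "HOL-Real_Asymp.Real_Asymp"
begin

section \<open>Difference quotients and parameter integrals\<close>

lemma has_vector_derivative_at_iff_difference_quotient:
  fixes \<phi> :: "real \<Rightarrow> 'a::real_normed_vector"
  shows "(\<phi> has_vector_derivative D) (at x) \<longleftrightarrow> ((\<lambda>y. (\<phi> y - \<phi> x) /\<^sub>R (y - x)) \<longlongrightarrow> D) (at x)"
proof -
  have eq: "norm (((\<phi> y - \<phi> x) - (y - x) *\<^sub>R D) /\<^sub>R norm (y - x)) = norm ((\<phi> y - \<phi> x) /\<^sub>R (y - x) - D)"
    if "y \<noteq> x" for y
  proof -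
    have "(\<phi> y - \<phi> x) /\<^sub>R (y - x) - D = ((\<phi> y - \<phi> x) - (y - x) *\<^sub>R D) /\<^sub>R (y - x)"
      using that by (simp add: scaleR_diff_right)
    then show ?thesis by simp
  qed
  have "(\<phi> has_vector_derivative D) (at x) \<longleftrightarrow>
     ((\<lambda>y. norm (((\<phi> y - \<phi> x) - (y - x) *\<^sub>R D) /\<^sub>R norm (y - x))) \<longlongrightarrow> 0) (at x)"
    unfolding has_vector_derivative_def has_derivative_at_within tendsto_norm_zero_iff
    by (simp add: bounded_linear_scaleR_left)
  also have "\<dots> \<longleftrightarrow> ((\<lambda>y. norm ((\<phi> y - \<phi> x) /\<^sub>R (y - x) - D)) \<longlongrightarrow> 0) (at x)"
    by (rule tendsto_cong, unfold eventually_at_filter, rule always_eventually, use eq in blast)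
  also have "\<dots> \<longleftrightarrow> ((\<lambda>y. (\<phi> y - \<phi> x) /\<^sub>R (y - x)) \<longlongrightarrow> D) (at x)"
    unfolding tendsto_norm_zero_iff LIM_zero_iff ..
  finally show ?thesis .
qed

lemma difference_quotient_tendsto_sequentially:
  fixes g :: "'a::real_normed_vector \<Rightarrow> 'b::real_normed_vector"
  assumes "((\<lambda>h. g (x + h *\<^sub>R v)) has_vector_derivative D) (at 0)"
    and "\<And>n. X n \<noteq> 0" and "X \<longlonglongrightarrow> 0"
  shows "(\<lambda>n. (g (x + X n *\<^sub>R v) - g x) /\<^sub>R X n) \<longlonglongrightarrow> D"
proof -
  have "((\<lambda>h. (g (x + h *\<^sub>R v) - g (x + 0 *\<^sub>R v)) /\<^sub>R (h - 0)) \<longlongrightarrow> D) (at 0)"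
    using assms(1) unfolding has_vector_derivative_at_iff_difference_quotient .
  then show ?thesis
    using assms(2,3) unfolding tendsto_at_iff_sequentially by (auto simp: o_def)
qed

lemma norm_diff_le_of_vector_derivative_bound:
  fixes \<phi> :: "real \<Rightarrow> 'a::real_normed_vector"
  assumes "\<And>s. (\<phi> has_vector_derivative \<phi>' s) (at s)" and "\<And>s. norm (\<phi>' s) \<le> B"
  shows "norm (\<phi> b - \<phi> a) \<le> B * \<bar>b - a\<bar>"
  using differentiable_bound[of UNIV \<phi> "\<lambda>s h. h *\<^sub>R \<phi>' s" B b a] assms
  by (simp add: has_vector_derivative_def onorm_scaleR_left onorm_id bounded_linear_ident)

lemma has_vector_derivative_along_line:
  fixes g :: "'a::real_normed_vector \<Rightarrow> 'b::real_normed_vector"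
  assumes "\<And>y. ((\<lambda>h. g (y + h *\<^sub>R v)) has_vector_derivative g' y) (at 0)"
  shows "((\<lambda>h. g (x + h *\<^sub>R v)) has_vector_derivative g' (x + s *\<^sub>R v)) (at s)"
proof -
  have "((\<lambda>h. h - s) has_vector_derivative 1) (at s)"
    by (auto intro!: derivative_eq_intros)
  from vector_diff_chain_at[OF this, of "\<lambda>h. g ((x + s *\<^sub>R v) + h *\<^sub>R v)"]
  have "((\<lambda>h. g ((x + s *\<^sub>R v) + h *\<^sub>R v)) \<circ> (\<lambda>h. h - s) has_vector_derivative g' (x + s *\<^sub>R v)) (at s)"
    using assms by simp
  moreover have "(\<lambda>h. g ((x + s *\<^sub>R v) + h *\<^sub>R v)) \<circ> (\<lambda>h. h - s) = (\<lambda>h. g (x + h *\<^sub>R v))"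
    by (auto simp: algebra_simps fun_eq_iff)
  ultimately show ?thesis by simp
qed

lemma norm_difference_quotient_le:
  fixes g :: "'a::real_normed_vector \<Rightarrow> 'b::real_normed_vector"
  assumes "\<And>y. ((\<lambda>h. g (y + h *\<^sub>R v)) has_vector_derivative g' y) (at 0)"
    and "\<And>y. norm (g' y) \<le> B" and "h \<noteq> 0"
  shows "norm ((g (x + h *\<^sub>R v) - g x) /\<^sub>R h) \<le> B"
proof -
  have "norm (g (x + h *\<^sub>R v) - g (x + 0 *\<^sub>R v)) \<le> B * \<bar>h - 0\<bar>"
    by (rule norm_diff_le_of_vector_derivative_bound[where \<phi>' = "\<lambda>s. g' (x + s *\<^sub>R v)"])
      (use has_vector_derivative_along_line[OF assms(1)] assms(2) in auto)
  then show ?thesis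
    using \<open>h \<noteq> 0\<close> by (simp add: inverse_eq_divide pos_divide_le_eq mult.commute)
qed

lemma set_borel_measurable_directional_derivative:
  fixes g g' :: "'c \<Rightarrow> 'a::real_normed_vector \<Rightarrow> 'b::{real_normed_vector, second_countable_topology}"
  assumes "\<And>y. set_borel_measurable M S (\<lambda>t. g t y)"
    and "\<And>t. t \<in> S \<Longrightarrow> ((\<lambda>h. g t (x + h *\<^sub>R v)) has_vector_derivative g' t x) (at 0)"
  shows "set_borel_measurable M S (\<lambda>t. g' t x)"
  unfolding set_borel_measurable_def
proof (rule borel_measurable_LIMSEQ_metric)
  define X where "X n = inverse (real (Suc n))" for n
  show "(\<lambda>t. (indicator S t *\<^sub>R g t (x + X n *\<^sub>R v) - indicator S t *\<^sub>R g t x) /\<^sub>R X n) \<in> borel_measurable M" for n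
    using assms(1) unfolding set_borel_measurable_def by measurable
  fix t
  show "(\<lambda>n. (indicator S t *\<^sub>R g t (x + X n *\<^sub>R v) - indicator S t *\<^sub>R g t x) /\<^sub>R X n)
      \<longlonglongrightarrow> indicator S t *\<^sub>R g' t x"
  proof (cases "t \<in> S")
    case True
    have "(\<lambda>n. (g t (x + X n *\<^sub>R v) - g t x) /\<^sub>R X n) \<longlonglongrightarrow> g' t x"
      by (rule difference_quotient_tendsto_sequentially[OF assms(2)[OF True]])
        (simp_all add: X_def LIMSEQ_inverse_real_of_nat del: of_nat_Suc)
    with True show ?thesis by simp
  qed simp
qed

lemma set_integral_norm_le:
  fixes g :: "'c \<Rightarrow> 'b::{banach, second_countable_topology}"
  assumes w: "set_integrable M S w" and g: "set_borel_measurable M S g"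
    and bound: "\<And>t. t \<in> S \<Longrightarrow> norm (g t) \<le> w t"
  shows "set_integrable M S g" and "norm (LINT t:S|M. g t) \<le> (LINT t:S|M. w t)"
proof -
  show gi: "set_integrable M S g"
    by (rule set_integrable_bound[OF w g], rule AE_I2)
      (use bound in \<open>force intro: order_trans[OF _ abs_ge_self]\<close>)
  have "norm (LINT t:S|M. g t) \<le> (LINT t:S|M. norm (g t))"
    by (rule set_integral_norm_bound[OF gi])
  also have "\<dots> \<le> (LINT t:S|M. w t)"
    by (rule set_integral_mono[OF set_integrable_norm[OF gi] w bound])
  finally show "norm (LINT t:S|M. g t) \<le> (LINT t:S|M. w t)" .
qed

lemma set_integral_dominated_convergence:
  fixes s :: "nat \<Rightarrow> 'c \<Rightarrow> 'b::{banach, second_countable_topology}"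
  assumes w: "set_integrable M S w" and f: "set_borel_measurable M S f"
    and s: "\<And>i. set_borel_measurable M S (s i)"
    and lim: "\<And>t. t \<in> S \<Longrightarrow> (\<lambda>i. s i t) \<longlonglongrightarrow> f t"
    and bound: "\<And>i t. t \<in> S \<Longrightarrow> norm (s i t) \<le> w t"
  shows "(\<lambda>i. LINT t:S|M. s i t) \<longlonglongrightarrow> (LINT t:S|M. f t)"
  unfolding set_lebesgue_integral_def
proof (rule integral_dominated_convergence[where w = "\<lambda>t. indicator S t *\<^sub>R w t"])
  show "AE t in M. (\<lambda>i. indicator S t *\<^sub>R s i t) \<longlonglongrightarrow> indicator S t *\<^sub>R f t"
    by (rule AE_I2) (simp add: lim indicator_def)
  show "AE t in M. norm (indicator S t *\<^sub>R s i t) \<le> indicator S t *\<^sub>R w t" for i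
    by (rule AE_I2) (simp add: bound indicator_def)
qed (use w f s in \<open>auto simp: set_integrable_def set_borel_measurable_def\<close>)

lemma continuous_on_set_integral:
  fixes g :: "'c \<Rightarrow> 'a::metric_space \<Rightarrow> 'b::{banach, second_countable_topology}"
  assumes w: "set_integrable M S w"
    and meas: "\<And>y. set_borel_measurable M S (\<lambda>t. g t y)"
    and bound: "\<And>t y. t \<in> S \<Longrightarrow> norm (g t y) \<le> w t"
    and cont: "\<And>t. t \<in> S \<Longrightarrow> continuous_on UNIV (g t)"
  shows "continuous_on UNIV (\<lambda>x. LINT t:S|M. g t x)"
proof (rule continuous_on_sequentiallyI)
  fix u :: "nat \<Rightarrow> 'a" and a assume "u \<longlonglongrightarrow> a"
  then have lim: "(\<lambda>n. g t (u n)) \<longlonglongrightarrow> g t a" if "t \<in> S" for t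
    using cont[OF that] by (auto intro: continuous_on_tendsto_compose)
  show "(\<lambda>n. LINT t:S|M. g t (u n)) \<longlonglongrightarrow> (LINT t:S|M. g t a)"
    by (rule set_integral_dominated_convergence[OF w]) (use meas bound lim in auto)
qed

lemma has_vector_derivative_set_integral:
  fixes g g' :: "'c \<Rightarrow> 'a::real_normed_vector \<Rightarrow> 'b::{banach, second_countable_topology}"
  assumes w: "set_integrable M S w"
    and meas: "\<And>y. set_borel_measurable M S (\<lambda>t. g t y)"
    and meas': "\<And>y. set_borel_measurable M S (\<lambda>t. g' t y)"
    and deriv: "\<And>t y. t \<in> S \<Longrightarrow> ((\<lambda>h. g t (y + h *\<^sub>R v)) has_vector_derivative g' t y) (at 0)"
    and bound: "\<And>t y. t \<in> S \<Longrightarrow> norm (g t y) \<le> w t"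
    and bound': "\<And>t y. t \<in> S \<Longrightarrow> norm (g' t y) \<le> w t"
  shows "((\<lambda>h. LINT t:S|M. g t (x + h *\<^sub>R v)) has_vector_derivative (LINT t:S|M. g' t x)) (at 0)"
  unfolding has_vector_derivative_at_iff_difference_quotient tendsto_at_iff_sequentially
proof (intro allI impI)
  fix X :: "nat \<Rightarrow> real" assume X: "\<forall>n. X n \<in> UNIV - {0}" "X \<longlonglongrightarrow> 0"
  define q where "q n t = (g t (x + X n *\<^sub>R v) - g t x) /\<^sub>R X n" for n t
  have gi: "set_integrable M S (\<lambda>t. g t y)" for y
    by (rule set_integral_norm_le(1)[OF w meas bound])
  have "(\<lambda>n. LINT t:S|M. q n t) \<longlonglongrightarrow> (LINT t:S|M. g' t x)"
  proof (rule set_integral_dominated_convergence[OF w meas'])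
    show "set_borel_measurable M S (q n)" for n
    proof -
      have "(\<lambda>t. (indicator S t *\<^sub>R g t (x + X n *\<^sub>R v) - indicator S t *\<^sub>R g t x) /\<^sub>R X n)
          \<in> borel_measurable M"
        using meas[of x] meas[of "x + X n *\<^sub>R v"] unfolding set_borel_measurable_def by measurable
      then show ?thesis
        unfolding set_borel_measurable_def q_def by (simp add: scaleR_diff_right mult.commute)
    qed
    show "(\<lambda>n. q n t) \<longlonglongrightarrow> g' t x" if "t \<in> S" for t
      unfolding q_def using X by (intro difference_quotient_tendsto_sequentially deriv that) auto
    show "norm (q n t) \<le> w t" if "t \<in> S" for n t
      unfolding q_def using X(1)
      by (intro norm_difference_quotient_le[where g' = "g' t", OF deriv[OF that] bound'[OF that]]) auto
  qed
  moreover have "(LINT t:S|M. q n t)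
      = ((LINT t:S|M. g t (x + X n *\<^sub>R v)) - (LINT t:S|M. g t (x + 0 *\<^sub>R v))) /\<^sub>R (X n - 0)" for n
    by (simp add: q_def set_integral_diff(2)[OF gi gi])
  ultimately show "((\<lambda>h. ((LINT t:S|M. g t (x + h *\<^sub>R v)) - (LINT t:S|M. g t (x + 0 *\<^sub>R v))) /\<^sub>R (h - 0)) \<circ> X)
      \<longlonglongrightarrow> (LINT t:S|M. g' t x)"
    by (simp add: o_def)
qed

lemma set_borel_measurable_Pair_section:
  fixes g :: "'a \<times> 'b \<Rightarrow> 'c::real_normed_vector"
  assumes g: "g \<in> borel_measurable (restrict_space M A \<Otimes>\<^sub>M N)"
    and "A \<in> sets M" "y \<in> space N"
  shows "set_borel_measurable M A (\<lambda>t. g (t, y))"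
proof -
  have "(\<lambda>t. (t, y)) \<in> measurable (restrict_space M A) (restrict_space M A \<Otimes>\<^sub>M N)"
    using \<open>y \<in> space N\<close> by (intro measurable_Pair measurable_ident_sets) auto
  from measurable_compose[OF this g] show ?thesis
    unfolding set_borel_measurable_def using \<open>A \<in> sets M\<close>
    by (subst (asm) borel_measurable_restrict_space_iff) auto
qed

lemma set_integrable_bounded_mult:
  fixes f g :: "'a \<Rightarrow> real"
  assumes f: "set_integrable M A f" and g: "g \<in> borel_measurable M"
    and bound: "\<And>t. t \<in> A \<Longrightarrow> \<bar>g t\<bar> \<le> B"
  shows "set_integrable M A (\<lambda>t. g t * f t)"
proof (rule set_integrable_bound[OF set_integrable_mult_left[OF set_integrable_abs[OF f], of "\<bar>B\<bar>"]])
  have "(\<lambda>t. indicator A t *\<^sub>R f t) \<in> borel_measurable M"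
    using f unfolding set_integrable_def by (rule borel_measurable_integrable)
  then show "set_borel_measurable M A (\<lambda>t. g t * f t)"
    using g unfolding set_borel_measurable_def by (simp add: mult.left_commute)
  show "AE t in M. t \<in> A \<longrightarrow> norm (g t * f t) \<le> norm (\<bar>f t\<bar> * \<bar>B\<bar>)"
  proof (rule AE_I2, intro impI)
    fix t assume "t \<in> A"
    then have "\<bar>g t\<bar> \<le> \<bar>B\<bar>"
      using bound by force
    from mult_left_mono[OF this abs_ge_zero[of "f t"]]
    show "norm (g t * f t) \<le> norm (\<bar>f t\<bar> * \<bar>B\<bar>)"
      by (simp add: abs_mult mult.commute)
  qed
qed

lemma integral_mult_tendsto_0:
  fixes h :: "'a \<Rightarrow> real" and e :: "real \<Rightarrow> 'a \<Rightarrow> real"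
  assumes h: "integrable M h" and e: "\<And>s. e s \<in> borel_measurable M"
    and lim: "\<And>t. h t \<noteq> 0 \<Longrightarrow> ((\<lambda>s. e s t) \<longlongrightarrow> 0) at_top"
    and bound: "\<And>s t. s \<ge> s\<^sub>0 \<Longrightarrow> h t \<noteq> 0 \<Longrightarrow> \<bar>e s t\<bar> \<le> 1"
  shows "((\<lambda>s. LINT t|M. e s t * h t) \<longlongrightarrow> 0) at_top"
proof -
  have "((\<lambda>s. LINT t|M. e s t * h t) \<longlongrightarrow> (LINT t|M. 0)) at_top"
  proof (rule integral_dominated_convergence_at_top[where w = "\<lambda>t. \<bar>h t\<bar>"])
    show "AE t in M. ((\<lambda>s. e s t * h t) \<longlongrightarrow> 0) at_top"
    proof (rule AE_I2)
      fix t show "((\<lambda>s. e s t * h t) \<longlongrightarrow> 0) at_top"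
        using lim[of t] by (cases "h t = 0") (auto intro: tendsto_mult_left_zero)
    qed
    show "\<forall>\<^sub>F s in at_top. AE t in M. norm (e s t * h t) \<le> \<bar>h t\<bar>"
    proof (intro eventually_mono[OF eventually_ge_at_top[of s\<^sub>0]] AE_I2)
      fix s t assume "s \<ge> s\<^sub>0"
      then show "norm (e s t * h t) \<le> \<bar>h t\<bar>"
        using bound[of s t] by (cases "h t = 0") (auto simp: abs_mult intro: mult_left_le_one_le)
    qed
  qed (use h e in \<open>auto intro: borel_measurable_integrable\<close>)
  then show ?thesis
    by simp
qed

lemma set_integral_exp_neg_mult_tendsto_0:
  fixes g :: "real \<Rightarrow> real"
  assumes g: "set_integrable lborel {0<..} (\<lambda>t. exp (- s\<^sub>0 * t) * g t)"
  shows "((\<lambda>s. LINT t:{0<..}|lborel. exp (- s * t) * g t) \<longlongrightarrow> 0) at_top"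
proof -
  let ?h = "\<lambda>t. indicator {0<..} t *\<^sub>R (exp (- s\<^sub>0 * t) * g t)"
  have "((\<lambda>s. LINT t|lborel. exp (- (s - s\<^sub>0) * t) * ?h t) \<longlongrightarrow> 0) at_top"
  proof (rule integral_mult_tendsto_0)
    show "integrable lborel ?h"
      using g unfolding set_integrable_def .
    show "((\<lambda>s. exp (- (s - s\<^sub>0) * t)) \<longlongrightarrow> 0) at_top" if "?h t \<noteq> 0" for t
    proof -
      have "t > 0"
        using that by (auto simp: indicator_def)
      then show ?thesis by real_asymp
    qed
    show "\<bar>exp (- (s - s\<^sub>0) * t)\<bar> \<le> 1" if "s \<ge> s\<^sub>0" "?h t \<noteq> 0" for s t
      using that by (auto simp: indicator_def mult_nonpos_nonneg)
  qed simp
  moreover have "(LINT t:{0<..}|lborel. exp (- s * t) * g t) = (LINT t|lborel. exp (- (s - s\<^sub>0) * t) * ?h t)"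
    for s
    unfolding set_lebesgue_integral_def
  proof (rule Bochner_Integration.integral_cong)
    fix t
    have "exp (- (s - s\<^sub>0) * t) * exp (- s\<^sub>0 * t) = exp (- s * t)"
      by (simp flip: exp_add add: algebra_simps)
    then show "indicator {0<..} t *\<^sub>R (exp (- s * t) * g t) = exp (- (s - s\<^sub>0) * t) * ?h t"
      by (simp add: ac_simps)
  qed simp
  ultimately show ?thesis
    by simp
qed

section \<open>Sup norm and Hoelder seminorm\<close>

lemma norm_le_supnorm: "bounded (range f) \<Longrightarrow> cmod (f x) \<le> supnorm f"
  unfolding supnorm_def by (rule cSUP_upper) (auto simp: bounded_iff bdd_above_def)

lemma supnorm_nonneg: "bounded (range f) \<Longrightarrow> 0 \<le> supnorm f"
  using norm_le_supnorm[of f undefined] norm_ge_zero order_trans by blast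

lemma supnorm_leI: "(\<And>x. cmod (f x) \<le> B) \<Longrightarrow> supnorm f \<le> B"
  unfolding supnorm_def by (rule cSUP_least) auto

lemma supnorm_cmult_le: "bounded (range f) \<Longrightarrow> supnorm (\<lambda>x. c * f x) \<le> cmod c * supnorm f"
  by (rule supnorm_leI) (simp add: norm_mult mult_left_mono norm_le_supnorm)

lemma Cb_subset_Bb: "Cb \<subseteq> Bb"
  unfolding Cb_def Bb_def by (auto intro: borel_measurable_continuous_onI)

lemma Bb_supnorm_nonneg: "f \<in> Bb \<Longrightarrow> 0 \<le> supnorm f"
  unfolding Bb_def by (auto intro: supnorm_nonneg)

lemma hoelder_quotient_le_hoelder_semi:
  fixes g :: "('n::finite) fn"
  assumes L: "\<And>x y. cmod (g x - g y) \<le> L * dist x y powr \<alpha>" and "x \<noteq> y"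
  shows "cmod (g x - g y) / dist x y powr \<alpha> \<le> hoelder_semi \<alpha> g"
proof -
  have "bdd_above ((\<lambda>p. cmod (g (fst p) - g (snd p)) / dist (fst p) (snd p) powr \<alpha>) ` {p. fst p \<noteq> snd p})"
  proof (rule bdd_aboveI2)
    fix p :: "(real^'n) \<times> (real^'n)" assume "p \<in> {p. fst p \<noteq> snd p}"
    then show "cmod (g (fst p) - g (snd p)) / dist (fst p) (snd p) powr \<alpha> \<le> L"
      using L[of "fst p" "snd p"] by (simp add: divide_le_eq)
  qed
  from cSUP_upper[OF _ this, of "(x, y)"] show ?thesis
    unfolding hoelder_semi_def using \<open>x \<noteq> y\<close> by simp
qed

lemma norm_diff_le_hoelder_semi:
  fixes g :: "('n::finite) fn"
  assumes "\<And>x y. cmod (g x - g y) \<le> L * dist x y powr \<alpha>"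
  shows "cmod (g x - g y) \<le> hoelder_semi \<alpha> g * dist x y powr \<alpha>"
  using hoelder_quotient_le_hoelder_semi[OF assms, of x y]
  by (cases "x = y") (simp_all add: divide_le_eq)

lemma hoelder_semi_nonneg:
  fixes g :: "('n::finite) fn"
  assumes "\<And>x y. cmod (g x - g y) \<le> L * dist x y powr \<alpha>"
  shows "0 \<le> hoelder_semi \<alpha> g"
  using hoelder_quotient_le_hoelder_semi[OF assms, of 0 "axis undefined 1"]
  by simp (meson order_trans zero_le_divide_iff norm_ge_zero powr_ge_zero)

lemma hoelder_semi_leI:
  fixes g :: "('n::finite) fn"
  assumes "\<And>x y. x \<noteq> y \<Longrightarrow> cmod (g x - g y) \<le> B * dist x y powr \<alpha>"
  shows "hoelder_semi \<alpha> g \<le> B"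
  unfolding hoelder_semi_def
proof (rule cSUP_least)
  have "(0, axis undefined 1) \<in> {p::(real^'n) \<times> (real^'n). fst p \<noteq> snd p}"
    by simp
  then show "{p::(real^'n) \<times> (real^'n). fst p \<noteq> snd p} \<noteq> {}" by blast
qed (use assms in \<open>auto simp: divide_le_eq\<close>)

lemma hoelder_semi_cmult_le:
  fixes g :: "('n::finite) fn"
  assumes "\<And>x y. cmod (g x - g y) \<le> L * dist x y powr \<alpha>"
  shows "hoelder_semi \<alpha> (\<lambda>x. c * g x) \<le> cmod c * hoelder_semi \<alpha> g"
proof (rule hoelder_semi_leI)
  fix x y :: "real^'n"
  have "cmod (c * g x - c * g y) = cmod c * cmod (g x - g y)"
    by (simp add: right_diff_distrib[symmetric] norm_mult)
  also have "\<dots> \<le> cmod c * (hoelder_semi \<alpha> g * dist x y powr \<alpha>)"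
    by (intro mult_left_mono norm_diff_le_hoelder_semi[OF assms]) simp
  finally show "cmod (c * g x - c * g y) \<le> cmod c * hoelder_semi \<alpha> g * dist x y powr \<alpha>"
    by (simp add: mult.assoc)
qed

section \<open>The Hoelder space\<close>

lemma finite_lists_length_le_UNIV: "finite {ls::'a::finite list. length ls \<le> k}"
  using finite_lists_length_le[of "UNIV :: 'a set" k] by simp

lemma
  assumes "g \<in> Cb_rho \<rho>"
  shows Cb_rho_pd_has_vector_derivative: "length ls < hk \<rho> \<Longrightarrow>
      ((\<lambda>t. pd ls g (x + t *\<^sub>R axis i 1)) has_vector_derivative pd (i # ls) g x) (at 0)"
    and Cb_rho_pd_in_Cb: "length ls \<le> hk \<rho> \<Longrightarrow> pd ls g \<in> Cb"
    and Cb_rho_pd_hoelder: "halpha \<rho> > 0 \<Longrightarrow> length ls = hk \<rho> \<Longrightarrow>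
      \<exists>L. \<forall>x y. cmod (pd ls g x - pd ls g y) \<le> L * dist x y powr halpha \<rho>"
  using assms unfolding Cb_rho_def by auto

lemma Cb_rho_pd_bounded: "g \<in> Cb_rho \<rho> \<Longrightarrow> length ls \<le> hk \<rho> \<Longrightarrow> bounded (range (pd ls g))"
  using Cb_rho_pd_in_Cb unfolding Cb_def by blast

lemma
  assumes g: "g \<in> Cb_rho \<rho>"
  shows supnorm_pd_le_Cb_rho_norm: "length ls \<le> hk \<rho> \<Longrightarrow> supnorm (pd ls g) \<le> Cb_rho_norm \<rho> g"
    and hoelder_semi_pd_le_Cb_rho_norm: "halpha \<rho> > 0 \<Longrightarrow> length ls = hk \<rho> \<Longrightarrow>
      hoelder_semi (halpha \<rho>) (pd ls g) \<le> Cb_rho_norm \<rho> g"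
proof -
  let ?S = "\<Sum>ls\<in>{ls. length ls \<le> hk \<rho>}. supnorm (pd ls g)"
  let ?H = "if halpha \<rho> > 0 then \<Sum>ls\<in>{ls. length ls = hk \<rho>}. hoelder_semi (halpha \<rho>) (pd ls g) else 0"
  have supnorm_nonneg': "0 \<le> supnorm (pd ls g)" if "length ls \<le> hk \<rho>" for ls
    using supnorm_nonneg[OF Cb_rho_pd_bounded[OF g that]] .
  have hoelder_nonneg': "0 \<le> hoelder_semi (halpha \<rho>) (pd ls g)" if "halpha \<rho> > 0" "length ls = hk \<rho>" for ls
    using Cb_rho_pd_hoelder[OF g that] hoelder_semi_nonneg by blast
  have S0: "0 \<le> ?S" and H0: "0 \<le> ?H"
    using supnorm_nonneg' hoelder_nonneg' by (auto intro!: sum_nonneg)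
  show "supnorm (pd ls g) \<le> Cb_rho_norm \<rho> g" if "length ls \<le> hk \<rho>"
  proof -
    have "supnorm (pd ls g) \<le> ?S"
      by (rule member_le_sum) (use that supnorm_nonneg' finite_lists_length_le_UNIV in auto)
    then show ?thesis unfolding Cb_rho_norm_def using H0 by linarith
  qed
  show "hoelder_semi (halpha \<rho>) (pd ls g) \<le> Cb_rho_norm \<rho> g" if "halpha \<rho> > 0" "length ls = hk \<rho>"
  proof -
    have "finite {ls::'a list. length ls = hk \<rho>}"
      by (rule finite_subset[OF _ finite_lists_length_le_UNIV]) auto
    then have "hoelder_semi (halpha \<rho>) (pd ls g) \<le> ?H"
      using that hoelder_nonneg' by (auto intro!: member_le_sum)
    then show ?thesis unfolding Cb_rho_norm_def using S0 by linarith
  qed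
qed

lemma Cb_rho_norm_le_uniform_bound:
  fixes g :: "('n::finite) fn" and B :: real
  assumes sup: "\<And>ls. length ls \<le> hk \<rho> \<Longrightarrow> supnorm (pd ls g) \<le> B"
    and hoelder: "\<And>ls. halpha \<rho> > 0 \<Longrightarrow> length ls = hk \<rho> \<Longrightarrow> hoelder_semi (halpha \<rho>) (pd ls g) \<le> B"
    and "0 \<le> B"
  shows "Cb_rho_norm \<rho> g \<le> 2 * real (card {ls::'n list. length ls \<le> hk \<rho>}) * B"
proof -
  let ?N = "card {ls::'n list. length ls \<le> hk \<rho>}"
  have "(\<Sum>ls\<in>{ls. length ls \<le> hk \<rho>}. supnorm (pd ls g)) \<le> (\<Sum>ls\<in>{ls::'n list. length ls \<le> hk \<rho>}. B)"
    by (rule sum_mono) (simp add: sup)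
  then have "(\<Sum>ls\<in>{ls. length ls \<le> hk \<rho>}. supnorm (pd ls g)) \<le> ?N * B"
    by simp
  moreover have "(\<Sum>ls\<in>{ls. length ls = hk \<rho>}. hoelder_semi (halpha \<rho>) (pd ls g)) \<le> ?N * B"
    if "halpha \<rho> > 0"
  proof -
    have "(\<Sum>ls\<in>{ls. length ls = hk \<rho>}. hoelder_semi (halpha \<rho>) (pd ls g))
        \<le> (\<Sum>ls\<in>{ls::'n list. length ls = hk \<rho>}. B)"
      by (rule sum_mono) (simp add: hoelder[OF that])
    also have "\<dots> = card {ls::'n list. length ls = hk \<rho>} * B"
      by simp
    also have "\<dots> \<le> ?N * B"
      by (intro mult_right_mono \<open>0 \<le> B\<close>) (auto intro!: card_mono finite_lists_length_le_UNIV)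
    finally show ?thesis .
  qed
  moreover have "0 \<le> ?N * B"
    using \<open>0 \<le> B\<close> by simp
  ultimately show ?thesis
    unfolding Cb_rho_norm_def by (auto simp: mult.assoc)
qed

lemma Cb_lincomb:
  assumes "u \<in> Cb" "v \<in> Cb"
  shows "(\<lambda>x. a * u x + b * v x) \<in> Cb"
proof -
  obtain Bu Bv where "\<And>x. cmod (u x) \<le> Bu" "\<And>x. cmod (v x) \<le> Bv"
    using assms unfolding Cb_def bounded_iff by auto
  then have "cmod (a * u x + b * v x) \<le> cmod a * Bu + cmod b * Bv" for x
    by (metis norm_mult norm_triangle_le add_mono mult_left_mono norm_ge_zero)
  then show ?thesis
    using assms unfolding Cb_def bounded_iff by (auto intro!: continuous_intros)
qed

lemma has_vector_derivative_pd_lincomb: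
  assumes u: "u \<in> Cb_rho \<rho>" and v: "v \<in> Cb_rho \<rho>" and l: "length ls < hk \<rho>"
  shows "((\<lambda>t. a * pd ls u (x + t *\<^sub>R axis i 1) + b * pd ls v (x + t *\<^sub>R axis i 1))
    has_vector_derivative (a * pd (i # ls) u x + b * pd (i # ls) v x)) (at 0)"
  by (intro has_vector_derivative_add has_vector_derivative_mult_right
      Cb_rho_pd_has_vector_derivative[OF u l] Cb_rho_pd_has_vector_derivative[OF v l])

lemma pd_lincomb:
  assumes u: "u \<in> Cb_rho \<rho>" and v: "v \<in> Cb_rho \<rho>" and "length ls \<le> hk \<rho>"
  shows "pd ls (\<lambda>x. a * u x + b * v x) = (\<lambda>x. a * pd ls u x + b * pd ls v x)"
  using \<open>length ls \<le> hk \<rho>\<close>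
proof (induction ls)
  case (Cons i ls)
  then show ?case
    using has_vector_derivative_pd_lincomb[OF u v, of ls]
    by (simp add: fun_eq_iff partial_d_def vector_derivative_at)
qed simp

lemma Cb_rho_lincomb:
  fixes u v :: "('n::finite) fn"
  assumes u: "u \<in> Cb_rho \<rho>" and v: "v \<in> Cb_rho \<rho>"
  shows "(\<lambda>x. a * u x + b * v x) \<in> Cb_rho \<rho>"
  unfolding Cb_rho_def
proof (intro CollectI conjI allI impI)
  fix ls :: "'n list" and i x assume l: "length ls < hk \<rho>"
  from has_vector_derivative_pd_lincomb[OF u v l]
  show "((\<lambda>t. pd ls (\<lambda>x. a * u x + b * v x) (x + t *\<^sub>R axis i 1)) has_vector_derivative
          pd (i # ls) (\<lambda>x. a * u x + b * v x) x) (at 0)"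
    using pd_lincomb[OF u v, of ls] pd_lincomb[OF u v, of "i # ls"] l by simp
next
  fix ls :: "'n list" assume l: "length ls \<le> hk \<rho>"
  show "pd ls (\<lambda>x. a * u x + b * v x) \<in> Cb"
    unfolding pd_lincomb[OF u v l] by (intro Cb_lincomb Cb_rho_pd_in_Cb[OF u l] Cb_rho_pd_in_Cb[OF v l])
next
  fix ls :: "'n list" assume h: "0 < halpha \<rho>" and l: "length ls = hk \<rho>"
  obtain Lu Lv where
    Lu: "\<And>x y. cmod (pd ls u x - pd ls u y) \<le> Lu * dist x y powr halpha \<rho>" and
    Lv: "\<And>x y. cmod (pd ls v x - pd ls v y) \<le> Lv * dist x y powr halpha \<rho>"
    using Cb_rho_pd_hoelder[OF u h l] Cb_rho_pd_hoelder[OF v h l] by blast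
  let ?w = "\<lambda>x. a * u x + b * v x"
  have "cmod (pd ls ?w x - pd ls ?w y) \<le> (cmod a * Lu + cmod b * Lv) * dist x y powr halpha \<rho>" for x y
  proof -
    have "pd ls ?w x - pd ls ?w y = a * (pd ls u x - pd ls u y) + b * (pd ls v x - pd ls v y)"
      using pd_lincomb[OF u v, of ls] l by (simp add: algebra_simps)
    then have "cmod (pd ls ?w x - pd ls ?w y)
        \<le> cmod a * (Lu * dist x y powr halpha \<rho>) + cmod b * (Lv * dist x y powr halpha \<rho>)"
      by (metis norm_mult norm_triangle_le add_mono mult_left_mono norm_ge_zero Lu Lv)
    then show ?thesis by (simp add: algebra_simps)
  qed
  then show "\<exists>L. \<forall>x y. cmod (pd ls ?w x - pd ls ?w y) \<le> L * dist x y powr halpha \<rho>"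
    by blast
qed

lemma
  fixes u :: "('n::finite) fn"
  assumes u: "u \<in> Cb_rho \<rho>"
  shows Cb_rho_cmult: "(\<lambda>x. c * u x) \<in> Cb_rho \<rho>"
    and Cb_rho_norm_cmult_le: "Cb_rho_norm \<rho> (\<lambda>x. c * u x) \<le> cmod c * Cb_rho_norm \<rho> u"
proof -
  have cu: "(\<lambda>x. c * u x) = (\<lambda>x. c * u x + 0 * u x)" by simp
  show "(\<lambda>x. c * u x) \<in> Cb_rho \<rho>"
    by (subst cu, rule Cb_rho_lincomb[OF u u])
  have pd_cmult: "pd ls (\<lambda>x. c * u x) = (\<lambda>x. c * pd ls u x)" if "length ls \<le> hk \<rho>" for ls
    by (subst cu, subst pd_lincomb[OF u u that]) simp
  have "supnorm (pd ls (\<lambda>x. c * u x)) \<le> cmod c * supnorm (pd ls u)" if "length ls \<le> hk \<rho>" for ls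
    unfolding pd_cmult[OF that] by (rule supnorm_cmult_le[OF Cb_rho_pd_bounded[OF u that]])
  moreover have "hoelder_semi (halpha \<rho>) (pd ls (\<lambda>x. c * u x)) \<le> cmod c * hoelder_semi (halpha \<rho>) (pd ls u)"
    if "halpha \<rho> > 0" "length ls = hk \<rho>" for ls
    using Cb_rho_pd_hoelder[OF u that] pd_cmult[of ls] that hoelder_semi_cmult_le by auto
  ultimately show "Cb_rho_norm \<rho> (\<lambda>x. c * u x) \<le> cmod c * Cb_rho_norm \<rho> u"
    unfolding Cb_rho_norm_def distrib_left by (auto simp: sum_distrib_left intro!: add_mono sum_mono)
qed

section \<open>Integrals of Hoelder-valued families\<close>

locale Cb_rho_integrand =
  fixes S :: "real set" and F :: "real \<Rightarrow> ('n::finite) fn" and w :: "real \<Rightarrow> real" and \<rho> :: real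
  assumes F_in_Cb_rho: "\<And>t. t \<in> S \<Longrightarrow> F t \<in> Cb_rho \<rho>"
    and Cb_rho_norm_F_le: "\<And>t. t \<in> S \<Longrightarrow> Cb_rho_norm \<rho> (F t) \<le> w t"
    and w_integrable: "set_integrable lborel S w"
    and F_measurable: "\<And>x. set_borel_measurable lborel S (\<lambda>t. F t x)"
begin

lemma norm_pd_le:
  assumes "t \<in> S" "length ls \<le> hk \<rho>"
  shows "cmod (pd ls (F t) x) \<le> w t"
proof -
  have "cmod (pd ls (F t) x) \<le> supnorm (pd ls (F t))"
    by (rule norm_le_supnorm[OF Cb_rho_pd_bounded[OF F_in_Cb_rho[OF assms(1)] assms(2)]])
  also have "\<dots> \<le> Cb_rho_norm \<rho> (F t)"
    by (rule supnorm_pd_le_Cb_rho_norm[OF F_in_Cb_rho[OF assms(1)] assms(2)])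
  also have "\<dots> \<le> w t"
    by (rule Cb_rho_norm_F_le[OF assms(1)])
  finally show ?thesis .
qed

lemma norm_diff_pd_le:
  assumes "t \<in> S" "halpha \<rho> > 0" "length ls = hk \<rho>"
  shows "cmod (pd ls (F t) x - pd ls (F t) y) \<le> w t * dist x y powr halpha \<rho>"
proof -
  obtain L where "\<And>x y. cmod (pd ls (F t) x - pd ls (F t) y) \<le> L * dist x y powr halpha \<rho>"
    using Cb_rho_pd_hoelder[OF F_in_Cb_rho[OF assms(1)] assms(2,3)] by blast
  then have "cmod (pd ls (F t) x - pd ls (F t) y) \<le> hoelder_semi (halpha \<rho>) (pd ls (F t)) * dist x y powr halpha \<rho>"
    by (rule norm_diff_le_hoelder_semi)
  also have "\<dots> \<le> w t * dist x y powr halpha \<rho>"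
    using hoelder_semi_pd_le_Cb_rho_norm[OF F_in_Cb_rho[OF assms(1)] assms(2,3)] Cb_rho_norm_F_le[OF \<open>t \<in> S\<close>]
    by (intro mult_right_mono) auto
  finally show ?thesis .
qed

lemma measurable_pd: "length ls \<le> hk \<rho> \<Longrightarrow> set_borel_measurable lborel S (\<lambda>t. pd ls (F t) x)"
proof (induction ls arbitrary: x)
  case (Cons i ls)
  then have l: "length ls < hk \<rho>" by simp
  show ?case
  proof (rule set_borel_measurable_directional_derivative[where g = "\<lambda>t. pd ls (F t)" and v = "axis i 1"])
    show "set_borel_measurable lborel S (\<lambda>t. pd ls (F t) y)" for y
      using Cons.IH l by simp
    show "((\<lambda>h. pd ls (F t) (x + h *\<^sub>R axis i 1)) has_vector_derivative pd (i # ls) (F t) x) (at 0)"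
      if "t \<in> S" for t
      by (rule Cb_rho_pd_has_vector_derivative[OF F_in_Cb_rho[OF that] l])
  qed
qed (simp add: F_measurable)

lemma has_vector_derivative_integral_pd:
  assumes "length ls < hk \<rho>"
  shows "((\<lambda>h. LINT t:S|lborel. pd ls (F t) (x + h *\<^sub>R axis i 1)) has_vector_derivative
      (LINT t:S|lborel. pd (i # ls) (F t) x)) (at 0)"
proof (rule has_vector_derivative_set_integral[OF w_integrable])
  have l: "length ls \<le> hk \<rho>" "length (i # ls) \<le> hk \<rho>"
    using assms by simp_all
  show "set_borel_measurable lborel S (\<lambda>t. pd ls (F t) y)" for y
    by (rule measurable_pd[OF l(1)])
  show "set_borel_measurable lborel S (\<lambda>t. pd (i # ls) (F t) y)" for y
    by (rule measurable_pd[OF l(2)])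
  show "cmod (pd ls (F t) y) \<le> w t" "cmod (pd (i # ls) (F t) y) \<le> w t" if "t \<in> S" for t y
    using norm_pd_le[OF that l(1)] norm_pd_le[OF that l(2)] by simp_all
  show "((\<lambda>h. pd ls (F t) (y + h *\<^sub>R axis i 1)) has_vector_derivative pd (i # ls) (F t) y) (at 0)"
    if "t \<in> S" for t y
    by (rule Cb_rho_pd_has_vector_derivative[OF F_in_Cb_rho[OF that] assms])
qed

lemma pd_integral:
  "length ls \<le> hk \<rho> \<Longrightarrow> pd ls (\<lambda>x. LINT t:S|lborel. F t x) = (\<lambda>x. LINT t:S|lborel. pd ls (F t) x)"
proof (induction ls)
  case (Cons i ls)
  then show ?case
    using has_vector_derivative_integral_pd[of ls]
    by (simp add: fun_eq_iff partial_d_def vector_derivative_at)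
qed simp

lemma norm_integral_pd_le:
  "length ls \<le> hk \<rho> \<Longrightarrow> cmod (LINT t:S|lborel. pd ls (F t) x) \<le> (LINT t:S|lborel. w t)"
  by (rule set_integral_norm_le(2)[OF w_integrable measurable_pd norm_pd_le]) simp_all

lemma norm_diff_integral_pd_le:
  assumes "halpha \<rho> > 0" "length ls = hk \<rho>"
  shows "cmod ((LINT t:S|lborel. pd ls (F t) x) - (LINT t:S|lborel. pd ls (F t) y))
    \<le> (LINT t:S|lborel. w t) * dist x y powr halpha \<rho>"
proof -
  have l: "length ls \<le> hk \<rho>" using assms by simp
  have pd_integrable: "set_integrable lborel S (\<lambda>t. pd ls (F t) z)" for z
    by (rule set_integral_norm_le(1)[OF w_integrable measurable_pd[OF l] norm_pd_le[OF _ l]])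
  have "cmod (LINT t:S|lborel. pd ls (F t) x - pd ls (F t) y)
      \<le> (LINT t:S|lborel. w t * dist x y powr halpha \<rho>)"
  proof (rule set_integral_norm_le(2))
    show "set_integrable lborel S (\<lambda>t. w t * dist x y powr halpha \<rho>)"
      using w_integrable by (rule set_integrable_mult_left)
    show "set_borel_measurable lborel S (\<lambda>t. pd ls (F t) x - pd ls (F t) y)"
      using measurable_pd[OF l, of x] measurable_pd[OF l, of y]
      unfolding set_borel_measurable_def scaleR_diff_right by (rule borel_measurable_diff)
    show "cmod (pd ls (F t) x - pd ls (F t) y) \<le> w t * dist x y powr halpha \<rho>" if "t \<in> S" for t
      by (rule norm_diff_pd_le[OF that assms])
  qed
  then show ?thesis
    by (simp add: set_integral_diff(2)[OF pd_integrable pd_integrable])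
qed

lemma integral_in_Cb_rho: "(\<lambda>x. LINT t:S|lborel. F t x) \<in> Cb_rho \<rho>"
  unfolding Cb_rho_def
proof (intro CollectI conjI allI impI)
  fix ls :: "'n list" and i x assume l: "length ls < hk \<rho>"
  then have "length ls \<le> hk \<rho>" "length (i # ls) \<le> hk \<rho>" by simp_all
  then show "((\<lambda>t. pd ls (\<lambda>x. LINT t:S|lborel. F t x) (x + t *\<^sub>R axis i 1)) has_vector_derivative
      pd (i # ls) (\<lambda>x. LINT t:S|lborel. F t x) x) (at 0)"
    by (simp only: pd_integral) (rule has_vector_derivative_integral_pd[OF l])
next
  fix ls :: "'n list" assume l: "length ls \<le> hk \<rho>"
  have "continuous_on UNIV (\<lambda>x. LINT t:S|lborel. pd ls (F t) x)"
  proof (rule continuous_on_set_integral[OF w_integrable measurable_pd[OF l]])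
    show "cmod (pd ls (F t) y) \<le> w t" if "t \<in> S" for t y
      by (rule norm_pd_le[OF that l])
    show "continuous_on UNIV (pd ls (F t))" if "t \<in> S" for t
      using Cb_rho_pd_in_Cb[OF F_in_Cb_rho[OF that] l] by (simp add: Cb_def)
  qed
  moreover have "bounded (range (\<lambda>x. LINT t:S|lborel. pd ls (F t) x))"
    unfolding bounded_iff using norm_integral_pd_le[OF l] by blast
  ultimately show "pd ls (\<lambda>x. LINT t:S|lborel. F t x) \<in> Cb"
    unfolding pd_integral[OF l] Cb_def by blast
next
  fix ls :: "'n list" assume h: "0 < halpha \<rho>" and l: "length ls = hk \<rho>"
  then show "\<exists>L. \<forall>x y. cmod (pd ls (\<lambda>x. LINT t:S|lborel. F t x) x - pd ls (\<lambda>x. LINT t:S|lborel. F t x) y)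
      \<le> L * dist x y powr halpha \<rho>"
    unfolding pd_integral[OF eq_imp_le[OF l]] using norm_diff_integral_pd_le[OF h l] by blast
qed

lemma Cb_rho_norm_integral_le:
  "Cb_rho_norm \<rho> (\<lambda>x. LINT t:S|lborel. F t x)
    \<le> 2 * real (card {ls::'n list. length ls \<le> hk \<rho>}) * (LINT t:S|lborel. w t)"
proof (rule Cb_rho_norm_le_uniform_bound)
  show "supnorm (pd ls (\<lambda>x. LINT t:S|lborel. F t x)) \<le> (LINT t:S|lborel. w t)"
    if "length ls \<le> hk \<rho>" for ls
    unfolding pd_integral[OF that] by (rule supnorm_leI[OF norm_integral_pd_le[OF that]])
  show "hoelder_semi (halpha \<rho>) (pd ls (\<lambda>x. LINT t:S|lborel. F t x)) \<le> (LINT t:S|lborel. w t)"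
    if "halpha \<rho> > 0" "length ls = hk \<rho>" for ls
    unfolding pd_integral[OF eq_imp_le[OF that(2)]]
    by (rule hoelder_semi_leI[OF norm_diff_integral_pd_le[OF that]])
  show "0 \<le> (LINT t:S|lborel. w t)"
    by (rule order_trans[OF norm_ge_zero norm_integral_pd_le[of "[]"]]) simp
qed

end

section \<open>Laplace transforms of smoothing semigroups\<close>

locale hoelder_smoothing_semigroup =
  fixes T :: "real \<Rightarrow> ('n::finite) fn \<Rightarrow> 'n fn" and M \<omega> \<rho> :: real and \<phi> :: "real \<Rightarrow> real"
  assumes kernel_semigroup: "kernel_semigroup T M \<omega>"
    and strong_Feller: "\<And>t. t > 0 \<Longrightarrow> strong_Feller (T t)"
    and T_in_Cb_rho: "\<And>t f. t > 0 \<Longrightarrow> f \<in> Bb \<Longrightarrow> T t f \<in> Cb_rho \<rho>"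
    and phi_integrable: "set_integrable lborel {0<..<1} \<phi>"
    and Cb_rho_norm_T_le_phi: "\<And>t f. t \<in> {0<..<1} \<Longrightarrow> f \<in> Bb \<Longrightarrow> Cb_rho_norm \<rho> (T t f) \<le> \<phi> t * supnorm f"
begin

lemma
  shows semigroup_law: "t > 0 \<Longrightarrow> s > 0 \<Longrightarrow> f \<in> Bb \<Longrightarrow> T (t + s) f = T t (T s f)"
    and supnorm_T_le: "t > 0 \<Longrightarrow> f \<in> Bb \<Longrightarrow> supnorm (T t f) \<le> M * exp (\<omega> * t) * supnorm f"
    and T_jointly_measurable: "f \<in> Bb \<Longrightarrow>
      (\<lambda>p. T (fst p) f (snd p)) \<in> borel_measurable (restrict_space borel {0<..} \<Otimes>\<^sub>M borel)"
  using kernel_semigroup unfolding kernel_semigroup_def by auto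

lemma T_in_Bb: "t > 0 \<Longrightarrow> f \<in> Bb \<Longrightarrow> T t f \<in> Bb"
  using strong_Feller Cb_subset_Bb unfolding strong_Feller_def by blast

lemma set_borel_measurable_T:
  assumes "f \<in> Bb" "S \<in> sets borel" "S \<subseteq> {0<..}"
  shows "set_borel_measurable lborel S (\<lambda>t. T t f x)"
proof -
  from set_borel_measurable_Pair_section[OF T_jointly_measurable[OF \<open>f \<in> Bb\<close>], of x]
  have "set_borel_measurable borel {0<..} (\<lambda>t. T t f x)"
    by simp
  from set_borel_measurable_subset[OF this assms(2,3)] show ?thesis
    unfolding set_borel_measurable_def by simp
qed

lemma Cb_rho_norm_T_le_exp:
  assumes t: "t > 1/2" and f: "f \<in> Bb"
  shows "Cb_rho_norm \<rho> (T t f) \<le> \<bar>\<phi> (1/2)\<bar> * \<bar>M\<bar> * exp (\<omega> * (t - 1/2)) * supnorm f"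
proof -
  let ?g = "T (t - 1/2) f"
  have g: "?g \<in> Bb"
    using T_in_Bb t f by simp
  have "T t f = T (1/2) ?g"
    using semigroup_law[of "1/2" "t - 1/2" f] t f by simp
  then have "Cb_rho_norm \<rho> (T t f) \<le> \<phi> (1/2) * supnorm ?g"
    using Cb_rho_norm_T_le_phi g by simp
  also have "\<dots> \<le> \<bar>\<phi> (1/2)\<bar> * supnorm ?g"
    by (intro mult_right_mono Bb_supnorm_nonneg g) simp
  also have "\<dots> \<le> \<bar>\<phi> (1/2)\<bar> * (\<bar>M\<bar> * exp (\<omega> * (t - 1/2)) * supnorm f)"
  proof (intro mult_left_mono)
    have "supnorm ?g \<le> M * exp (\<omega> * (t - 1/2)) * supnorm f"
      using supnorm_T_le t f by simp
    also have "\<dots> \<le> \<bar>M\<bar> * exp (\<omega> * (t - 1/2)) * supnorm f"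
      by (intro mult_right_mono Bb_supnorm_nonneg f) auto
    finally show "supnorm ?g \<le> \<bar>M\<bar> * exp (\<omega> * (t - 1/2)) * supnorm f" .
  qed simp
  finally show ?thesis
    by (simp add: mult.assoc)
qed

definition weight :: "real \<Rightarrow> real" where
  "weight t = (if t < 1 then \<bar>\<phi> t\<bar> else \<bar>\<phi> (1/2)\<bar> * \<bar>M\<bar> * exp (\<omega> * (t - 1/2)))"

lemma Cb_rho_norm_T_le_weight:
  assumes "t > 0" "f \<in> Bb"
  shows "Cb_rho_norm \<rho> (T t f) \<le> weight t * supnorm f"
proof (cases "t < 1")
  case True
  then have "Cb_rho_norm \<rho> (T t f) \<le> \<phi> t * supnorm f"
    using Cb_rho_norm_T_le_phi assms by simp
  also have "\<dots> \<le> \<bar>\<phi> t\<bar> * supnorm f"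
    by (intro mult_right_mono Bb_supnorm_nonneg assms) simp
  finally show ?thesis
    using True by (simp add: weight_def)
qed (use Cb_rho_norm_T_le_exp assms in \<open>simp add: weight_def\<close>)

lemma exp_weight_integrable:
  assumes "s > \<omega>"
  shows "set_integrable lborel {0<..} (\<lambda>t. exp (- s * t) * weight t)"
proof -
  have "set_integrable lborel {0<..<1} (\<lambda>t. exp (- s * t) * \<bar>\<phi> t\<bar>)"
  proof (rule set_integrable_bounded_mult[OF set_integrable_abs[OF phi_integrable]])
    fix t :: real assume t: "t \<in> {0<..<1}"
    have "- s * t \<le> \<bar>s\<bar> * t"
      using t by (intro mult_right_mono) auto
    also have "\<dots> \<le> \<bar>s\<bar>"
      using t by (simp add: mult_left_le)
    finally show "\<bar>exp (- s * t)\<bar> \<le> exp \<bar>s\<bar>"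
      by simp
  qed simp
  moreover have "exp (- s * t) * weight t = exp (- s * t) * \<bar>\<phi> t\<bar>" if "t \<in> {0<..<1}" for t
    using that by (simp add: weight_def)
  ultimately have small: "set_integrable lborel {0<..<1} (\<lambda>t. exp (- s * t) * weight t)"
    by (subst set_integrable_cong[OF refl refl]) auto
  let ?c = "\<bar>\<phi> (1/2)\<bar> * \<bar>M\<bar> * exp (- \<omega> / 2)"
  have "set_integrable lborel {1..} (\<lambda>t. exp (- (t * (s - \<omega>))))"
    by (rule set_integrable_subset[OF integrable_I0i_exp_mscale]) (use assms in auto)
  then have "set_integrable lborel {1..} (\<lambda>t. ?c * exp (- (t * (s - \<omega>))))"
    by (rule set_integrable_mult_right)
  moreover have "exp (- s * t) * weight t = ?c * exp (- (t * (s - \<omega>)))" if "t \<in> {1..}" for t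
  proof -
    have "exp (- s * t) * exp (\<omega> * (t - 1/2)) = exp (- \<omega> / 2) * exp (- (t * (s - \<omega>)))"
      by (simp flip: exp_add add: algebra_simps)
    then show ?thesis
      using that by (simp add: weight_def mult_ac)
  qed
  ultimately have large: "set_integrable lborel {1..} (\<lambda>t. exp (- s * t) * weight t)"
    by (subst set_integrable_cong[OF refl refl]) auto
  have "{0<..} = {0<..<1} \<union> {1::real..}"
    by auto
  then show ?thesis
    using set_integrable_Un[OF small large] by simp
qed

definition laplace_bound :: "real \<Rightarrow> real" where
  "laplace_bound s = 2 * real (card {ls::'n list. length ls \<le> hk \<rho>})
     * (LINT t:{0<..}|lborel. exp (- s * t) * weight t)"

lemma laplace_bound_tendsto_0: "(laplace_bound \<longlongrightarrow> 0) at_top"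
  unfolding laplace_bound_def
  using set_integral_exp_neg_mult_tendsto_0[OF exp_weight_integrable[of "\<omega> + 1"]]
  by (auto intro: tendsto_mult_right_zero)

lemma
  assumes z: "Re z > \<omega>" and f: "f \<in> Bb"
  shows laplace_tr_in_Cb_rho: "laplace_tr T z f \<in> Cb_rho \<rho>"
    and Cb_rho_norm_laplace_tr_le: "Cb_rho_norm \<rho> (laplace_tr T z f) \<le> laplace_bound (Re z) * supnorm f"
proof -
  interpret integrand: Cb_rho_integrand "{0<..}" "\<lambda>t x. exp (- z * of_real t) * T t f x"
    "\<lambda>t. exp (- Re z * t) * weight t * supnorm f" \<rho>
  proof
    fix t :: real assume t: "t \<in> {0<..}"
    then show "(\<lambda>x. exp (- z * of_real t) * T t f x) \<in> Cb_rho \<rho>"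
      using T_in_Cb_rho f by (simp add: Cb_rho_cmult)
    have "Cb_rho_norm \<rho> (\<lambda>x. exp (- z * of_real t) * T t f x)
        \<le> cmod (exp (- z * of_real t)) * Cb_rho_norm \<rho> (T t f)"
      using Cb_rho_norm_cmult_le[OF T_in_Cb_rho[OF _ f], of t "exp (- z * of_real t)"] t by simp
    also have "\<dots> \<le> exp (- Re z * t) * (weight t * supnorm f)"
      using Cb_rho_norm_T_le_weight t f by (simp add: norm_exp_eq_Re)
    finally show "Cb_rho_norm \<rho> (\<lambda>x. exp (- z * of_real t) * T t f x) \<le> exp (- Re z * t) * weight t * supnorm f"
      by (simp add: mult.assoc)
  next
    show "set_integrable lborel {0<..} (\<lambda>t. exp (- Re z * t) * weight t * supnorm f)"
      using exp_weight_integrable[OF z] by (rule set_integrable_mult_left)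
  next
    fix x
    have "(\<lambda>t. exp (- z * of_real t) * (indicator {0<..} t *\<^sub>R T t f x)) \<in> borel_measurable lborel"
      using set_borel_measurable_T[OF f, of "{0<..}" x] unfolding set_borel_measurable_def by measurable
    then show "set_borel_measurable lborel {0<..} (\<lambda>t. exp (- z * of_real t) * T t f x)"
      unfolding set_borel_measurable_def by (simp add: mult.left_commute)
  qed
  have laplace_tr: "laplace_tr T z f = (\<lambda>x. LINT t:{0<..}|lborel. exp (- z * of_real t) * T t f x)"
    by (simp add: laplace_tr_def fun_eq_iff)
  have integral: "(LINT t:{0<..}|lborel. exp (- Re z * t) * weight t * supnorm f)
      = (LINT t:{0<..}|lborel. exp (- Re z * t) * weight t) * supnorm f"
    by (rule set_integral_mult_left)
  show "laplace_tr T z f \<in> Cb_rho \<rho>"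
    unfolding laplace_tr by (rule integrand.integral_in_Cb_rho)
  show "Cb_rho_norm \<rho> (laplace_tr T z f) \<le> laplace_bound (Re z) * supnorm f"
    using integrand.Cb_rho_norm_integral_le unfolding laplace_tr integral laplace_bound_def by (simp add: mult.assoc)
qed

lemma Domain_full_generator_subset: "Domain (full_generator T) \<subseteq> Cb_rho \<rho>"
proof
  fix f assume "f \<in> Domain (full_generator T)"
  then obtain g where f: "f \<in> Bb" and g: "g \<in> Bb"
    and generator: "\<And>t x. t > 0 \<Longrightarrow> T t f x - f x = (LINT s:{0<..t}|lborel. T s g x)"
    unfolding full_generator_def by auto
  interpret integrand: Cb_rho_integrand "{0<..1/2}" "\<lambda>s. T s g" "\<lambda>s. \<bar>\<phi> s\<bar> * supnorm g" \<rho>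
  proof
    fix s :: real assume s: "s \<in> {0<..1/2}"
    then show "T s g \<in> Cb_rho \<rho>"
      using T_in_Cb_rho g by simp
    show "Cb_rho_norm \<rho> (T s g) \<le> \<bar>\<phi> s\<bar> * supnorm g"
      using Cb_rho_norm_T_le_weight[of s g] s g by (simp add: weight_def)
  next
    show "set_integrable lborel {0<..1/2} (\<lambda>s. \<bar>\<phi> s\<bar> * supnorm g)"
      by (intro set_integrable_mult_left set_integrable_subset[OF set_integrable_abs[OF phi_integrable]]) auto
    show "set_borel_measurable lborel {0<..1/2} (\<lambda>s. T s g x)" for x
      by (rule set_borel_measurable_T[OF g]) auto
  qed
  have "f = (\<lambda>x. 1 * T (1/2) f x + (-1) * (LINT s:{0<..1/2}|lborel. T s g x))"
    using generator[of "1/2"] by (simp add: fun_eq_iff diff_eq_eq)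
  also have "\<dots> \<in> Cb_rho \<rho>"
    using T_in_Cb_rho[OF _ f] integrand.integral_in_Cb_rho by (intro Cb_rho_lincomb) auto
  finally show "f \<in> Cb_rho \<rho>" .
qed

end

theorem lemma6p2:
  fixes T :: "real \<Rightarrow> (real^'n::finite \<Rightarrow> complex) \<Rightarrow> (real^'n \<Rightarrow> complex)"
    and M \<omega> \<rho> :: real and \<phi> :: "real \<Rightarrow> real"
  assumes sg: "kernel_semigroup T M \<omega>"
    and Cb: "Cb_semigroup T"
    and sF: "\<forall>t>0. strong_Feller (T t)"
    and rho: "\<rho> > 0"
    and reg: "\<forall>t>0. \<forall>f\<in>Bb. T t f \<in> Cb_rho \<rho>"
    and phi: "set_integrable lborel {0<..<1} \<phi>"
    and est: "\<forall>t\<in>{0<..<1}. \<forall>f\<in>Bb. Cb_rho_norm \<rho> (T t f) \<le> \<phi> t * supnorm f"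
  shows "\<exists>C :: complex \<Rightarrow> real.
           (\<forall>z. Re z > \<omega> \<longrightarrow> (\<forall>f\<in>Bb. laplace_tr T z f \<in> Cb_rho \<rho>
                 \<and> Cb_rho_norm \<rho> (laplace_tr T z f) \<le> C z * supnorm f))
         \<and> (\<forall>\<epsilon>>0. \<exists>r. \<forall>z. Re z > max r \<omega> \<longrightarrow> C z < \<epsilon>)
         \<and> Domain (full_generator T) \<subseteq> Cb_rho \<rho>"
proof -
  interpret hoelder_smoothing_semigroup T M \<omega> \<rho> \<phi>
    using sg sF reg phi est by unfold_locales auto
  have "\<exists>r. \<forall>z. Re z > max r \<omega> \<longrightarrow> laplace_bound (Re z) < \<epsilon>" if \<epsilon>: "\<epsilon> > 0" for \<epsilon>
  proof -
    obtain r where "\<And>s. s \<ge> r \<Longrightarrow> laplace_bound s < \<epsilon>"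
      using order_tendstoD(2)[OF laplace_bound_tendsto_0 \<epsilon>]
      unfolding eventually_at_top_linorder by blast
    then show ?thesis
      by (intro exI[of _ r]) auto
  qed
  then show ?thesis
    using laplace_tr_in_Cb_rho Cb_rho_norm_laplace_tr_le Domain_full_generator_subset
    by (intro exI[of _ "\<lambda>z. laplace_bound (Re z)"]) auto
qed

end
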